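(* Let $d\geq 2$ and consider a $d$-level system with energies $E_1\leq E_2\leq\dots\leq E_d$. Fix inverse temperatures $\alpha>\beta\geq 0$ and let $\boldsymbol{\gamma}$, $\boldsymbol{\Gamma}$ be the corresponding Gibbs distributions, $\gamma_k=e^{-\alpha E_k}/\sum_{i=1}^d e^{-\alpha E_i}$ and $\Gamma_k=e^{-\beta E_k}/\sum_{i=1}^d e^{-\beta E_i}$. Let $\mathbf{p}$ be a $d$-dimensional probability vector and let $\mathbf{q}$ be any probability vector achievable from $\mathbf{p}$ by the fused operations $\mathcal{F}_{AB}$ (as defined in the context). Then $$q_d\leq M(\mathbf{p}):=\max\left\{p_d,\frac{\Gamma_d}{\Gamma_{d-1}}\right\}.$$ In particular, $M$ is a monotone of the resulting resource theory, i.e., $M(\mathbf{q})\leq M(\mathbf{p})$ whenever $\mathbf{q}$ is achievable from $\mathbf{p}$ via $\mathcal{F}_{AB}$.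
   Context: Incoherent states of the $d$-level system are represented by probability vectors $\mathbf{p}=(p_1,\dots,p_d)$ (occupations of the energy levels). Thermomajorisation relative to a full-support probability vector $\mathbf{g}$: let $\pi$ be a permutation of $\{1,\dots,d\}$ such that $p_{\pi_i}/g_{\pi_i}\geq p_{\pi_{i+1}}/g_{\pi_{i+1}}$ for all $i$; the thermomajorisation curve of $\mathbf{p}$ relative to $\mathbf{g}$ is the piecewise linear curve connecting the points $\left(\sum_{i=1}^j g_{\pi_i},\sum_{i=1}^j p_{\pi_i}\right)$, $j=0,\dots,d$ (with $j=0$ giving $(0,0)$). We write $\mathbf{p}\succ_{\mathbf{g}}\mathbf{q}$ if the curve of $\mathbf{p}$ is nowhere below that of $\mathbf{q}$; this characterises the existence of a thermal operation (at the temperature corresponding to $\mathbf{g}$) mapping $\mathbf{p}$ to $\mathbf{q}$. A state $\mathbf{q}$ is achievable from $\mathbf{p}$ via $\mathcal{F}_{AB}$ if it is a convex combination of vectors $\mathbf{r}$ for which there is a finite chain $\mathbf{p}=\mathbf{r}^{(0)}\succ_{\mathbf{g}_1}\mathbf{r}^{(1)}\succ_{\mathbf{g}_2}\dots\succ_{\mathbf{g}_n}\mathbf{r}^{(n)}=\mathbf{r}$ with each $\mathbf{g}_i\in\{\boldsymbol{\gamma},\boldsymbol{\Gamma}\}$ (i.e., alternately applying thermal operations with respect to the two temperatures). *)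

theory Defs
  imports Complex_Main
begin

text \<open>Vectors of a d-level system are functions nat => real; only the entries
  at indices 1..d are meaningful.\<close>

definition prob_vec :: "nat \<Rightarrow> (nat \<Rightarrow> real) \<Rightarrow> bool" where
  "prob_vec d p \<longleftrightarrow> (\<forall>i\<in>{1..d}. 0 \<le> p i) \<and> (\<Sum>i=1..d. p i) = 1"

definition gibbs :: "nat \<Rightarrow> (nat \<Rightarrow> real) \<Rightarrow> real \<Rightarrow> nat \<Rightarrow> real" where
  "gibbs d E b k = exp (- b * E k) / (\<Sum>i=1..d. exp (- b * E i))"

definition sorting_perm :: "nat \<Rightarrow> (nat \<Rightarrow> real) \<Rightarrow> (nat \<Rightarrow> real) \<Rightarrow> (nat \<Rightarrow> nat) \<Rightarrow> bool" where
  "sorting_perm d g p \<pi> \<longleftrightarrow> bij_betw \<pi> {1..d} {1..d} \<and>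
     (\<forall>i\<in>{1..<d}. p (\<pi> i) / g (\<pi> i) \<ge> p (\<pi> (Suc i)) / g (\<pi> (Suc i)))"

definition curve_x :: "(nat \<Rightarrow> real) \<Rightarrow> (nat \<Rightarrow> nat) \<Rightarrow> nat \<Rightarrow> real" where
  "curve_x g \<pi> j = (\<Sum>i=1..j. g (\<pi> i))"

definition curve_y :: "(nat \<Rightarrow> real) \<Rightarrow> (nat \<Rightarrow> nat) \<Rightarrow> nat \<Rightarrow> real" where
  "curve_y p \<pi> j = (\<Sum>i=1..j. p (\<pi> i))"

definition on_curve_segment :: "(nat \<Rightarrow> real) \<Rightarrow> (nat \<Rightarrow> real) \<Rightarrow> (nat \<Rightarrow> nat) \<Rightarrow> nat \<Rightarrow> real \<Rightarrow> bool" where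
  "on_curve_segment g p \<pi> j x \<longleftrightarrow> curve_x g \<pi> (j - 1) \<le> x \<and> x \<le> curve_x g \<pi> j"

definition curve_val :: "(nat \<Rightarrow> real) \<Rightarrow> (nat \<Rightarrow> real) \<Rightarrow> (nat \<Rightarrow> nat) \<Rightarrow> nat \<Rightarrow> real \<Rightarrow> real" where
  "curve_val g p \<pi> j x = curve_y p \<pi> (j - 1) +
     (x - curve_x g \<pi> (j - 1)) / (curve_x g \<pi> j - curve_x g \<pi> (j - 1))
       * (curve_y p \<pi> j - curve_y p \<pi> (j - 1))"

definition thermo_maj :: "nat \<Rightarrow> (nat \<Rightarrow> real) \<Rightarrow> (nat \<Rightarrow> real) \<Rightarrow> (nat \<Rightarrow> real) \<Rightarrow> bool" where
  "thermo_maj d g p q \<longleftrightarrow>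
     (\<forall>\<pi> \<sigma>. sorting_perm d g p \<pi> \<longrightarrow> sorting_perm d g q \<sigma> \<longrightarrow>
        (\<forall>j\<in>{1..d}. \<forall>k\<in>{1..d}. \<forall>x.
           on_curve_segment g p \<pi> j x \<longrightarrow> on_curve_segment g q \<sigma> k x \<longrightarrow>
           curve_val g q \<sigma> k x \<le> curve_val g p \<pi> j x))"

inductive chain_reach :: "nat \<Rightarrow> (nat \<Rightarrow> real) \<Rightarrow> (nat \<Rightarrow> real) \<Rightarrow> (nat \<Rightarrow> real) \<Rightarrow> (nat \<Rightarrow> real) \<Rightarrow> bool"
  for d g1 g2 p where
  refl: "chain_reach d g1 g2 p p"
| step: "chain_reach d g1 g2 p r \<Longrightarrow> prob_vec d s \<Longrightarrow>
         thermo_maj d g1 r s \<or> thermo_maj d g2 r s \<Longrightarrow> chain_reach d g1 g2 p s"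

definition achievable_FAB :: "nat \<Rightarrow> (nat \<Rightarrow> real) \<Rightarrow> (nat \<Rightarrow> real) \<Rightarrow> (nat \<Rightarrow> real) \<Rightarrow> (nat \<Rightarrow> real) \<Rightarrow> bool" where
  "achievable_FAB d g1 g2 p q \<longleftrightarrow>
     (\<exists>(n::nat) (w::nat \<Rightarrow> real) (r::nat \<Rightarrow> nat \<Rightarrow> real).
        (\<forall>m<n. 0 \<le> w m \<and> chain_reach d g1 g2 p (r m)) \<and> (\<Sum>m<n. w m) = 1 \<and>
        (\<forall>i\<in>{1..d}. q i = (\<Sum>m<n. w m * r m i)))"

definition M_mono :: "nat \<Rightarrow> (nat \<Rightarrow> real) \<Rightarrow> (nat \<Rightarrow> real) \<Rightarrow> real" where
  "M_mono d \<Gamma> p = max (p d) (\<Gamma> d / \<Gamma> (d - 1))"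

end

theory Submission
  imports Defs
begin

text \<open>Read at the abscissa \<open>g\<^sub>d\<close>, the thermomajorisation curve of any vector \<open>q\<close> lies
  at or above \<open>q\<^sub>d\<close>: up to the elbow that adds level \<open>d\<close>, all slopes are at least
  \<open>q\<^sub>d/g\<^sub>d\<close>. If \<open>g\<^sub>d\<close> and \<open>g\<^bsub>d-1\<^esub>\<close> are the two smallest entries of \<open>g\<close>, the curve
  of \<open>p\<close> at \<open>g\<^sub>d\<close> is still on its first segment and has value
  \<open>g\<^sub>d p\<^sub>\<pi>\<^sub>1 / g\<^sub>\<pi>\<^sub>1\<close>, which is \<open>p\<^sub>d\<close> or at most \<open>g\<^sub>d/g\<^bsub>d-1\<^esub>\<close>. Hence a thermal
  operation for \<open>g\<close> cannot raise \<open>q\<^sub>d\<close> above \<open>max p\<^sub>d (g\<^sub>d/g\<^bsub>d-1\<^esub>)\<close>. For Gibbs states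
  with energies sorted increasingly this ratio is \<open>exp (\<beta> (E\<^bsub>d-1\<^esub> - E\<^sub>d))\<close>, which
  decreases with the inverse temperature, so the colder state \<open>\<gamma>\<close> obeys the bound
  of the hotter state \<open>\<Gamma>\<close>; the bound thus survives chains of both operations and
  convex mixtures of their results.\<close>

lemma sorting_perm_exists: "\<exists>\<pi>. sorting_perm d g p \<pi>"
proof -
  define key where "key i = - (p i / g i)" for i
  define xs where "xs = sort_key key [1..<Suc d]"
  define \<pi> where "\<pi> = (\<lambda>i. xs ! (i - 1))"
  have len: "length xs = d" and set_xs: "set xs = {1..d}"
    by (auto simp: xs_def)
  have "bij_betw (\<lambda>i. i - 1) {1..d} {..<d}"
    by (rule bij_betw_byWitness[where f' = Suc]) auto
  moreover have "bij_betw ((!) xs) {..<d} {1..d}"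
    using len set_xs by (intro bij_betw_nth) (auto simp: xs_def)
  ultimately have "bij_betw \<pi> {1..d} {1..d}"
    unfolding \<pi>_def using bij_betw_trans by (fastforce simp: comp_def)
  moreover have "p (\<pi> (Suc i)) / g (\<pi> (Suc i)) \<le> p (\<pi> i) / g (\<pi> i)" if "i \<in> {1..<d}" for i
  proof -
    have "sorted (map key xs)"
      by (simp add: xs_def)
    then have "map key xs ! (i - 1) \<le> map key xs ! i"
      using that len by (intro sorted_nth_mono) auto
    moreover have "i - 1 < length xs"
      using that len by auto
    ultimately show ?thesis
      using that len by (simp add: \<pi>_def key_def)
  qed
  ultimately show ?thesis
    unfolding sorting_perm_def by blast
qed

lemma curve_x_Suc: "curve_x g \<pi> (Suc j) = curve_x g \<pi> j + g (\<pi> (Suc j))"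
  by (simp add: curve_x_def)

lemma curve_x_nonneg:
  assumes "bij_betw \<pi> {1..d} {1..d}" and "\<And>i. i \<in> {1..d} \<Longrightarrow> g i > 0" and "j \<le> d"
  shows "0 \<le> curve_x g \<pi> j"
  unfolding curve_x_def
proof (rule sum_nonneg)
  fix i
  assume "i \<in> {1..j}"
  then have "\<pi> i \<in> {1..d}"
    using assms(1,3) bij_betwE by fastforce
  then show "0 \<le> g (\<pi> i)"
    using assms(2) less_imp_le by blast
qed

lemma curve_val_at_entry_ge:
  assumes \<sigma>: "sorting_perm d g q \<sigma>" and i: "i \<in> {1..d}"
    and g_pos: "\<And>i. i \<in> {1..d} \<Longrightarrow> g i > 0"
  shows "\<exists>k\<in>{1..d}. on_curve_segment g q \<sigma> k (g i) \<and> q i \<le> curve_val g q \<sigma> k (g i)"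
proof -
  have bij: "bij_betw \<sigma> {1..d} {1..d}"
    using \<sigma> by (simp add: sorting_perm_def)
  obtain K where K: "K \<in> {1..d}" "\<sigma> K = i"
    using bij i by (metis bij_betw_iff_bijections)
  define c where "c = q i / g i"
  have ratio_ge: "c \<le> q (\<sigma> j) / g (\<sigma> j)" if "1 \<le> j" "j \<le> K" for j
    using that(2)
  proof (induction j rule: inc_induct)
    case base
    then show ?case using K by (simp add: c_def)
  next
    case (step n)
    then have "n \<in> {1..<d}" using that(1) K by auto
    then show ?case
      using \<sigma> step.IH unfolding sorting_perm_def by fastforce
  qed
  have entry_ge: "c * g (\<sigma> j) \<le> q (\<sigma> j)" if "1 \<le> j" "j \<le> K" for j
  proof -
    have "g (\<sigma> j) > 0"
      using g_pos bij_betwE[OF bij] that K by auto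
    then show ?thesis
      using ratio_ge[OF that] by (simp add: pos_le_divide_eq)
  qed
  have below_K: "c * curve_x g \<sigma> j \<le> curve_y q \<sigma> j" if "j \<le> K" for j
    unfolding curve_x_def curve_y_def sum_distrib_left
    using that entry_ge by (intro sum_mono) auto
  have "g i \<le> curve_x g \<sigma> K"
  proof -
    obtain m where m: "K = Suc m"
      using K by (cases K) auto
    then show ?thesis
      using curve_x_nonneg[OF bij g_pos, where j = m] K by (simp add: curve_x_Suc)
  qed
  define k where "k = (LEAST j. g i \<le> curve_x g \<sigma> j)"
  have k_le_K: "k \<le> K" and x_k: "g i \<le> curve_x g \<sigma> k"
    unfolding k_def using \<open>g i \<le> curve_x g \<sigma> K\<close> by (rule Least_le, rule LeastI)
  obtain m where m: "k = Suc m"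
    using x_k g_pos[OF i] by (cases k) (auto simp: curve_x_def)
  have x_m: "curve_x g \<sigma> m < g i"
    using not_less_Least[of m "\<lambda>j. g i \<le> curve_x g \<sigma> j"] m by (simp add: k_def)
  have k: "k \<in> {1..d}"
    using k_le_K K m by auto
  have "q i = c * curve_x g \<sigma> m + (g i - curve_x g \<sigma> m) * c"
    using g_pos[OF i] by (simp add: c_def algebra_simps)
  also have "\<dots> \<le> curve_y q \<sigma> m + (g i - curve_x g \<sigma> m) * (q (\<sigma> k) / g (\<sigma> k))"
    using below_K ratio_ge x_m k_le_K m by (intro add_mono mult_left_mono) auto
  also have "\<dots> = curve_val g q \<sigma> k (g i)"
    using m by (simp add: curve_val_def curve_x_Suc curve_y_def)
  finally show ?thesis
    using k m x_m x_k unfolding on_curve_segment_def by (intro bexI[of _ k]) auto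
qed

lemma curve_val_first_segment_le:
  assumes \<pi>: "sorting_perm d g p \<pi>" and d: "d \<ge> 2" and p: "prob_vec d p"
    and g_pos: "\<And>i. i \<in> {1..d} \<Longrightarrow> g i > 0"
    and g_last_min: "\<And>i. i \<in> {1..d} \<Longrightarrow> g d \<le> g i"
    and g_second_min: "\<And>i. i \<in> {1..d-1} \<Longrightarrow> g (d - 1) \<le> g i"
  shows "on_curve_segment g p \<pi> 1 (g d) \<and> curve_val g p \<pi> 1 (g d) \<le> max (p d) (g d / g (d - 1))"
proof -
  have \<pi>1: "\<pi> 1 \<in> {1..d}"
    using \<pi> d bij_betwE by (fastforce simp: sorting_perm_def)
  have p_nonneg: "0 \<le> p (\<pi> 1)" and p_le_1: "p (\<pi> 1) \<le> 1"
    using p \<pi>1 member_le_sum[of "\<pi> 1" "{1..d}" p] by (auto simp: prob_vec_def)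
  have "g d / g (\<pi> 1) * p (\<pi> 1) \<le> max (p d) (g d / g (d - 1))"
  proof (cases "\<pi> 1 = d")
    case True
    then show ?thesis using g_pos[of d] d by simp
  next
    case False
    then have "\<pi> 1 \<in> {1..d-1}" using \<pi>1 by auto
    have "g d / g (\<pi> 1) * p (\<pi> 1) \<le> g d / g (\<pi> 1)"
      using p_nonneg p_le_1 g_pos[OF \<pi>1] g_pos[of d] d by (intro mult_right_le_one_le) auto
    also have "\<dots> \<le> g d / g (d - 1)"
      using g_second_min[OF \<open>\<pi> 1 \<in> {1..d-1}\<close>] g_pos[OF \<pi>1] g_pos[of "d - 1"] g_pos[of d] d
      by (intro divide_left_mono) auto
    finally show ?thesis by simp
  qed
  then show ?thesis
    using g_last_min[OF \<pi>1] g_pos[of d] d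
    by (simp add: on_curve_segment_def curve_val_def curve_x_def curve_y_def)
qed

lemma thermo_maj_last_entry_le:
  assumes d: "d \<ge> 2" and p: "prob_vec d p" and maj: "thermo_maj d g p q"
    and g_pos: "\<And>i. i \<in> {1..d} \<Longrightarrow> g i > 0"
    and g_last_min: "\<And>i. i \<in> {1..d} \<Longrightarrow> g d \<le> g i"
    and g_second_min: "\<And>i. i \<in> {1..d-1} \<Longrightarrow> g (d - 1) \<le> g i"
  shows "q d \<le> max (p d) (g d / g (d - 1))"
proof -
  obtain \<pi> \<sigma> where \<pi>: "sorting_perm d g p \<pi>" and \<sigma>: "sorting_perm d g q \<sigma>"
    using sorting_perm_exists by blast
  obtain k where k: "k \<in> {1..d}" "on_curve_segment g q \<sigma> k (g d)"
    and q_le: "q d \<le> curve_val g q \<sigma> k (g d)"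
    using curve_val_at_entry_ge[OF \<sigma> _ g_pos] d by fastforce
  note p_curve = curve_val_first_segment_le[OF \<pi> d p g_pos g_last_min g_second_min]
  have "curve_val g q \<sigma> k (g d) \<le> curve_val g p \<pi> 1 (g d)"
    using maj \<pi> \<sigma> k p_curve d unfolding thermo_maj_def by auto
  then show ?thesis
    using q_le p_curve by linarith
qed

lemma gibbs_pos:
  assumes "d \<ge> 1"
  shows "gibbs d E b i > 0"
  using assms unfolding gibbs_def by (intro divide_pos_pos sum_pos) auto

lemma gibbs_antimono:
  assumes "E i \<le> E j" and "b \<ge> 0"
  shows "gibbs d E b j \<le> gibbs d E b i"
  using assms unfolding gibbs_def
  by (intro divide_right_mono sum_nonneg) (auto simp: mult_left_mono)

lemma gibbs_ratio:
  assumes "d \<ge> 1"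
  shows "gibbs d E b i / gibbs d E b j = exp (b * (E j - E i))"
proof -
  have "(\<Sum>k=1..d. exp (- b * E k)) > 0"
    using assms by (intro sum_pos) auto
  then show ?thesis
    by (simp add: gibbs_def exp_diff[symmetric] algebra_simps)
qed

lemma gibbs_ratio_antimono:
  assumes "d \<ge> 1" and "E i \<le> E j" and "\<beta> \<le> \<alpha>"
  shows "gibbs d E \<alpha> j / gibbs d E \<alpha> i \<le> gibbs d E \<beta> j / gibbs d E \<beta> i"
  using assms by (simp add: gibbs_ratio mult_right_mono_neg)

lemma thermo_maj_gibbs_last_entry_le:
  assumes d: "d \<ge> 2" and p: "prob_vec d p" and maj: "thermo_maj d (gibbs d E b) p q"
    and E: "\<And>i j. i \<in> {1..d} \<Longrightarrow> j \<in> {1..d} \<Longrightarrow> i \<le> j \<Longrightarrow> E i \<le> E j"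
    and b: "b \<ge> 0"
  shows "q d \<le> max (p d) (gibbs d E b d / gibbs d E b (d - 1))"
  using d p maj
proof (rule thermo_maj_last_entry_le)
  show "gibbs d E b i > 0" for i
    using d by (intro gibbs_pos) auto
  show "gibbs d E b d \<le> gibbs d E b i" if "i \<in> {1..d}" for i
    using that d E b by (intro gibbs_antimono) auto
  show "gibbs d E b (d - 1) \<le> gibbs d E b i" if "i \<in> {1..d-1}" for i
    using that d E b by (intro gibbs_antimono) auto
qed

lemma chain_reach_prob_vec:
  assumes "chain_reach d g1 g2 p r" and "prob_vec d p"
  shows "prob_vec d r"
  using assms by (induction rule: chain_reach.induct) auto

lemma chain_reach_monotone:
  fixes f :: "(nat \<Rightarrow> real) \<Rightarrow> 'a::preorder"
  assumes "chain_reach d g1 g2 p r" and "prob_vec d p"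
    and step_mono: "\<And>r s. prob_vec d r \<Longrightarrow> prob_vec d s \<Longrightarrow>
      thermo_maj d g1 r s \<or> thermo_maj d g2 r s \<Longrightarrow> f s \<le> f r"
  shows "f r \<le> f p"
  using assms(1)
proof (induction rule: chain_reach.induct)
  case refl
  then show ?case by simp
next
  case (step r s)
  then have "f s \<le> f r"
    using chain_reach_prob_vec assms(2) by (intro step_mono) auto
  then show ?case using step.IH by (rule order_trans)
qed

lemma achievable_FAB_entry_le:
  fixes B :: real
  assumes "achievable_FAB d g1 g2 p q" and "i \<in> {1..d}"
    and "\<And>r. chain_reach d g1 g2 p r \<Longrightarrow> r i \<le> B"
  shows "q i \<le> B"
proof -
  obtain n :: nat and w :: "nat \<Rightarrow> real" and r where nwr: "\<forall>m<n. 0 \<le> w m \<and> chain_reach d g1 g2 p (r m)"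
    "(\<Sum>m<n. w m) = 1" "\<forall>i\<in>{1..d}. q i = (\<Sum>m<n. w m * r m i)"
    using assms(1) unfolding achievable_FAB_def by blast
  have "q i = (\<Sum>m<n. w m * r m i)"
    using nwr(3) assms(2) by blast
  also have "\<dots> \<le> (\<Sum>m<n. w m * B)"
    using nwr(1) assms(3) by (intro sum_mono mult_left_mono) auto
  also have "\<dots> = B"
    using nwr(2) by (simp add: sum_distrib_right[symmetric])
  finally show ?thesis .
qed

theorem theorem1:
  fixes d :: nat and E p q :: "nat \<Rightarrow> real" and \<alpha> \<beta> :: real
  assumes "d \<ge> 2"
    and "\<And>i j. i \<in> {1..d} \<Longrightarrow> j \<in> {1..d} \<Longrightarrow> i \<le> j \<Longrightarrow> E i \<le> E j"
    and "\<alpha> > \<beta>" and "\<beta> \<ge> 0"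
    and "prob_vec d p"
    and "achievable_FAB d (gibbs d E \<alpha>) (gibbs d E \<beta>) p q"
  shows "q d \<le> max (p d) (gibbs d E \<beta> d / gibbs d E \<beta> (d - 1)) \<and>
         M_mono d (gibbs d E \<beta>) q \<le> M_mono d (gibbs d E \<beta>) p"
proof -
  note d = assms(1) and E = assms(2)
  let ?M = "M_mono d (gibbs d E \<beta>)"
  have cold_ratio_le: "gibbs d E \<alpha> d / gibbs d E \<alpha> (d - 1) \<le> gibbs d E \<beta> d / gibbs d E \<beta> (d - 1)"
    using d E[of "d - 1" d] assms(3) by (intro gibbs_ratio_antimono) auto
  have "?M s \<le> ?M r"
    if "prob_vec d r" "thermo_maj d (gibbs d E \<alpha>) r s \<or> thermo_maj d (gibbs d E \<beta>) r s" for r s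
    using that(2) thermo_maj_gibbs_last_entry_le[OF d that(1) _ E] assms(3,4) cold_ratio_le
    unfolding M_mono_def by fastforce
  then have "r d \<le> ?M p" if "chain_reach d (gibbs d E \<alpha>) (gibbs d E \<beta>) p r" for r
    using chain_reach_monotone[OF that assms(5), of ?M] unfolding M_mono_def by auto
  then have "q d \<le> ?M p"
    using achievable_FAB_entry_le[OF assms(6)] d by auto
  then show ?thesis
    unfolding M_mono_def by simp
qed

end
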